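(* Let $f$ be a measurable map preserving a probability measure $\mu$, and fix $\tau>0$. Let $(U_n)$, $(V_n)$ be nested sequences of measurable sets with $V_n\subset U_n$, $\mu(V_n)>0$, $\mu(U_n)\to0$, and $\mu(U_n\setminus V_n)/\mu(U_n)\to0$ as $n\to\infty$. Then for every $k\in\mathbb{N}_0$, $$\big|\mu(\zeta_{U_n}=k)-\mu(\zeta_{V_n}=k)\big|\to0\quad\text{as }n\to\infty.$$
   Context: For a set $W$ of positive measure, $\zeta_W=\sum_{0\le j<\tau/\mu(W)}\mathbb{I}_W\circ f^j$. *)

theory Defs
  imports "HOL-Probability.Probability"
begin

definition zeta :: "'a measure \<Rightarrow> ('a \<Rightarrow> 'a) \<Rightarrow> real \<Rightarrow> 'a set \<Rightarrow> 'a \<Rightarrow> nat" where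
  "zeta M f \<tau> W x = (\<Sum>j \<in> {j::nat. real j < \<tau> / measure M W}. indicator W ((f ^^ j) x))"

end

theory Submission
  imports Defs
begin

text \<open>Write \<open>N\<^sub>W = \<lceil>\<tau> / \<mu>(W)\<rceil>\<close>, so that \<open>\<zeta>\<^sub>W\<close> counts the visits to \<open>W\<close> among the first
  \<open>N\<^sub>W\<close> iterates and \<open>N\<^sub>U \<le> N\<^sub>V\<close>. The counts \<open>\<zeta>\<^sub>U\<close> and \<open>\<zeta>\<^sub>V\<close> can only differ at points whose orbit
  meets \<open>U - V\<close> before time \<open>N\<^sub>U\<close>, or meets \<open>V\<close> between times \<open>N\<^sub>U\<close> and \<open>N\<^sub>V\<close>. By invariance
  of \<open>\<mu>\<close> this exceptional set has measure at most
  \<open>N\<^sub>U \<mu>(U - V) + (N\<^sub>V - N\<^sub>U) \<mu>(V) \<le> 2\<tau> \<mu>(U - V) / \<mu>(U) + \<mu>(U)\<close>, which tends to \<open>0\<close>.\<close>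

lemma measurable_funpow [measurable]:
  assumes "f \<in> measurable M M"
  shows "f ^^ j \<in> measurable M M"
  by (induction j) (auto intro: measurable_compose[OF _ assms])

lemma distr_funpow:
  assumes "f \<in> measurable M M" and "distr M M f = M"
  shows "distr M M (f ^^ j) = M"
proof (induction j)
  case (Suc j)
  have "distr M M (f ^^ Suc j) = distr (distr M M f) M (f ^^ j)"
    unfolding funpow_Suc_right using assms(1) by (simp add: distr_distr)
  also have "\<dots> = M"
    using Suc assms(2) by simp
  finally show ?case .
qed simp

lemma measure_funpow_vimage:
  assumes "f \<in> measurable M M" and "distr M M f = M" and "A \<in> sets M"
  shows "measure M ((f ^^ j) -` A \<inter> space M) = measure M A"
  using measure_distr[OF measurable_funpow[OF assms(1)] assms(3)] distr_funpow[OF assms(1,2)]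
  by simp

lemma measure_UN_funpow_vimage_le:
  assumes "f \<in> measurable M M" and "distr M M f = M" and "A \<in> sets M" and "finite J"
  shows "measure M (\<Union>j\<in>J. (f ^^ j) -` A \<inter> space M) \<le> card J * measure M A"
proof -
  have "measure M (\<Union>j\<in>J. (f ^^ j) -` A \<inter> space M)
      \<le> (\<Sum>j\<in>J. measure M ((f ^^ j) -` A \<inter> space M))"
    using assms by (intro measure_UNION_le) auto
  also have "\<dots> = card J * measure M A"
    using measure_funpow_vimage[OF assms(1-3)] by simp
  finally show ?thesis .
qed

lemma zeta_eq_sum_lessThan:
  assumes "measure M W > 0"
  shows "zeta M f \<tau> W x = (\<Sum>j<nat \<lceil>\<tau> / measure M W\<rceil>. indicator W ((f ^^ j) x))"
proof -
  have "real j < \<tau> / measure M W \<longleftrightarrow> j < nat \<lceil>\<tau> / measure M W\<rceil>" for j :: nat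
    by (metis less_ceiling_iff of_int_of_nat_eq zless_nat_eq_int_zless)
  then have "{j::nat. real j < \<tau> / measure M W} = {..<nat \<lceil>\<tau> / measure M W\<rceil>}"
    by auto
  then show ?thesis
    unfolding zeta_def by simp
qed

lemma sets_sum_indicator_funpow_eq:
  assumes [measurable]: "W \<in> sets M" "f \<in> measurable M M"
  shows "{x \<in> space M. (\<Sum>j<N. indicator W ((f ^^ j) x) :: nat) = k} \<in> sets M"
  unfolding indicator_def by measurable

lemma sum_indicator_eq_if_avoids:
  fixes y :: "nat \<Rightarrow> 'a" and N N' :: nat
  assumes "V \<subseteq> U" and "N \<le> N'"
    and "\<And>j. j < N \<Longrightarrow> y j \<notin> U - V" and "\<And>j. j \<in> {N..<N'} \<Longrightarrow> y j \<notin> V"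
  shows "(\<Sum>j<N. indicator U (y j)) = (\<Sum>j<N'. indicator V (y j) :: nat)"
proof -
  have "(\<Sum>j<N'. indicator V (y j) :: nat)
      = (\<Sum>j<N. indicator V (y j)) + (\<Sum>j\<in>{N..<N'}. indicator V (y j))"
    using assms(2) sum.atLeastLessThan_concat[of 0 N N', symmetric] by (simp add: atLeast0LessThan)
  also have "(\<Sum>j\<in>{N..<N'}. indicator V (y j) :: nat) = 0"
    using assms(4) by simp
  also have "(\<Sum>j<N. indicator V (y j) :: nat) = (\<Sum>j<N. indicator U (y j))"
    using assms(1,3) by (intro sum.cong) (auto simp: indicator_def)
  finally show ?thesis by simp
qed

lemma (in finite_measure) measure_diff_le_of_agree_outside:
  assumes "A \<in> sets M" "B \<in> sets M" "D \<in> sets M" and "A - D \<subseteq> B" "B - D \<subseteq> A"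
  shows "\<bar>measure M A - measure M B\<bar> \<le> measure M D"
proof -
  have "measure M X \<le> measure M Y + measure M D"
    if "X \<in> sets M" "Y \<in> sets M" "X - D \<subseteq> Y" for X Y
  proof -
    have "measure M X \<le> measure M (Y \<union> D)"
      using that assms(3) by (intro finite_measure_mono) auto
    also have "\<dots> \<le> measure M Y + measure M D"
      using that(2) assms(3) by (rule measure_Un_le)
    finally show ?thesis .
  qed
  from this[of A B] this[of B A] assms show ?thesis by linarith
qed

lemma nat_ceiling_divide_antimono:
  fixes a b \<tau> :: real
  assumes "0 < b" and "b \<le> a" and "0 < \<tau>"
  shows "nat \<lceil>\<tau> / a\<rceil> \<le> nat \<lceil>\<tau> / b\<rceil>"
  using assms by (intro nat_mono ceiling_mono frac_le) auto

lemma nat_ceiling_divide_defect_le: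
  fixes a b \<tau> :: real
  assumes "0 < b" and "b \<le> a" and "0 < \<tau>"
  shows "nat \<lceil>\<tau> / a\<rceil> * (a - b) + (nat \<lceil>\<tau> / b\<rceil> - nat \<lceil>\<tau> / a\<rceil>) * b
         \<le> 2 * \<tau> * ((a - b) / a) + a"
proof -
  define NU where "NU = nat \<lceil>\<tau> / a\<rceil>"
  define NV where "NV = nat \<lceil>\<tau> / b\<rceil>"
  have "real NU \<le> \<tau> / a + 1" "real NV \<le> \<tau> / b + 1" "\<tau> / a \<le> real NU"
    using assms of_int_ceiling_le_add_one by (auto simp: NU_def NV_def intro: real_nat_ceiling_ge)
  moreover have "NU \<le> NV"
    unfolding NU_def NV_def using assms by (rule nat_ceiling_divide_antimono)
  ultimately have "NU * (a - b) + (NV - NU) * b \<le> (\<tau> / a + 1) * (a - b) + (\<tau> / b + 1 - \<tau> / a) * b"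
    using assms by (intro add_mono mult_right_mono) simp_all
  also have "\<dots> = 2 * \<tau> * ((a - b) / a) + a"
    using assms by (simp add: field_simps)
  finally show ?thesis
    unfolding NU_def NV_def .
qed

lemma measure_zeta_eq_diff_le:
  assumes "prob_space M" and "f \<in> measurable M M" and "distr M M f = M" and "\<tau> > 0"
    and "U \<in> sets M" and "V \<in> sets M" and "V \<subseteq> U" and "measure M V > 0"
  shows "\<bar>measure M {x \<in> space M. zeta M f \<tau> U x = k}
           - measure M {x \<in> space M. zeta M f \<tau> V x = k}\<bar>
         \<le> 2 * \<tau> * (measure M (U - V) / measure M U) + measure M U"
proof -
  interpret prob_space M by (rule assms(1))
  define a where "a = measure M U"
  define b where "b = measure M V"
  define NU where "NU = nat \<lceil>\<tau> / a\<rceil>"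
  define NV where "NV = nat \<lceil>\<tau> / b\<rceil>"
  have "0 < b" "b \<le> a"
    using assms(8) finite_measure_mono[OF assms(7,5)] by (simp_all add: a_def b_def)
  have diff: "measure M (U - V) = a - b"
    unfolding a_def b_def by (rule finite_measure_Diff[OF assms(5-7)])
  have "NU \<le> NV"
    unfolding NU_def NV_def using \<open>0 < b\<close> \<open>b \<le> a\<close> assms(4) by (rule nat_ceiling_divide_antimono)
  have zU: "zeta M f \<tau> U x = (\<Sum>j<NU. indicator U ((f ^^ j) x))" for x
    using zeta_eq_sum_lessThan[of M U] \<open>0 < b\<close> \<open>b \<le> a\<close> by (simp add: NU_def a_def)
  have zV: "zeta M f \<tau> V x = (\<Sum>j<NV. indicator V ((f ^^ j) x))" for x
    using zeta_eq_sum_lessThan \<open>0 < b\<close> by (simp add: NV_def b_def)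
  define D1 where "D1 = (\<Union>j\<in>{..<NU}. (f ^^ j) -` (U - V) \<inter> space M)"
  define D2 where "D2 = (\<Union>j\<in>{NU..<NV}. (f ^^ j) -` V \<inter> space M)"
  have sets_D: "D1 \<in> sets M" "D2 \<in> sets M"
    unfolding D1_def D2_def using assms(2,5,6) by (auto intro!: measurable_sets)
  have "zeta M f \<tau> U x = zeta M f \<tau> V x" if "x \<in> space M - (D1 \<union> D2)" for x
    unfolding zU zV using that \<open>NU \<le> NV\<close> assms(7)
    by (intro sum_indicator_eq_if_avoids) (auto simp: D1_def D2_def)
  then have "\<bar>measure M {x \<in> space M. zeta M f \<tau> U x = k}
              - measure M {x \<in> space M. zeta M f \<tau> V x = k}\<bar> \<le> measure M (D1 \<union> D2)"
    unfolding zU zV using sets_D assms(2,5,6)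
    by (intro measure_diff_le_of_agree_outside sets_sum_indicator_funpow_eq) auto
  also have "\<dots> \<le> measure M D1 + measure M D2"
    using measure_Un_le sets_D by blast
  also have "\<dots> \<le> NU * (a - b) + (NV - NU) * b"
  proof (rule add_mono)
    show "measure M D1 \<le> NU * (a - b)"
      using measure_UN_funpow_vimage_le[OF assms(2,3), of "U - V" "{..<NU}"] assms(5,6) diff
      unfolding D1_def by simp
    show "measure M D2 \<le> (NV - NU) * b"
      using measure_UN_funpow_vimage_le[OF assms(2,3,6), of "{NU..<NV}"] \<open>NU \<le> NV\<close>
      unfolding D2_def b_def by simp
  qed
  also have "\<dots> \<le> 2 * \<tau> * ((a - b) / a) + a"
    unfolding NU_def NV_def using \<open>0 < b\<close> \<open>b \<le> a\<close> assms(4) by (rule nat_ceiling_divide_defect_le)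
  finally show ?thesis
    unfolding diff a_def .
qed

theorem lemma5p6:
  fixes M :: "'a measure" and f :: "'a \<Rightarrow> 'a" and \<tau> :: real
    and U V :: "nat \<Rightarrow> 'a set"
  assumes "prob_space M"
    and "f \<in> measurable M M" and "distr M M f = M"
    and "\<tau> > 0"
    and "\<And>n. U n \<in> sets M" and "\<And>n. V n \<in> sets M"
    and "\<And>n. U (Suc n) \<subseteq> U n" and "\<And>n. V (Suc n) \<subseteq> V n"
    and "\<And>n. V n \<subseteq> U n"
    and "\<And>n. measure M (V n) > 0"
    and "(\<lambda>n. measure M (U n)) \<longlonglongrightarrow> 0"
    and "(\<lambda>n. measure M (U n - V n) / measure M (U n)) \<longlonglongrightarrow> 0"
  shows "\<forall>k::nat. (\<lambda>n. \<bar>measure M {x \<in> space M. zeta M f \<tau> (U n) x = k}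
                        - measure M {x \<in> space M. zeta M f \<tau> (V n) x = k}\<bar>) \<longlonglongrightarrow> 0"
proof
  fix k :: nat
  have bound: "norm \<bar>measure M {x \<in> space M. zeta M f \<tau> (U n) x = k}
                 - measure M {x \<in> space M. zeta M f \<tau> (V n) x = k}\<bar>
      \<le> 2 * \<tau> * (measure M (U n - V n) / measure M (U n)) + measure M (U n)" for n
    using measure_zeta_eq_diff_le[OF assms(1-4) assms(5,6,9,10)] by simp
  have "(\<lambda>n. 2 * \<tau> * (measure M (U n - V n) / measure M (U n)) + measure M (U n)) \<longlonglongrightarrow> 2 * \<tau> * 0 + 0"
    by (intro tendsto_intros assms(11,12))
  then show "(\<lambda>n. \<bar>measure M {x \<in> space M. zeta M f \<tau> (U n) x = k}
                        - measure M {x \<in> space M. zeta M f \<tau> (V n) x = k}\<bar>) \<longlonglongrightarrow> 0"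
    using Lim_null_comparison[OF always_eventually, OF allI, OF bound] by simp
qed

end
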